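(* Let $m\ge1$, $n\ge1$, fix $t_0\in\mathbb{Z}^m$ and let $\mathcal{Z}=\{t\in\mathbb{Z}^m\mid t\ge t_0\}$. Let $T=(T^1,\dots,T^m)\in\mathbb{N}^m$, $T\ne0$. Let $A_\alpha\colon\mathcal{Z}\to\mathcal{M}_n(\mathbb{C})$, $\alpha\in\{1,\dots,m\}$, satisfy $$A_\alpha(t+1_\beta)A_\beta(t)=A_\beta(t+1_\alpha)A_\alpha(t),\quad \forall t\in\mathcal{Z},\ \forall\alpha,\beta,$$ and suppose that each $A_\alpha$ is periodic of period $T$ (i.e. $A_\alpha(t+T)=A_\alpha(t)$ for all $t\in\mathcal{Z}$) and $A_\alpha(t)$ is invertible for all $t\in\mathcal{Z}$. Let $\Phi(t)=\chi(t,t_0)$, $t\in\mathcal{Z}$. Then there exist a function $P\colon\mathcal{Z}\to\mathcal{M}_n(\mathbb{C})$, periodic of period $T$, and a constant invertible matrix $B\in\mathcal{M}_n(\mathbb{C})$ such that $\Phi(t)=P(t)B^{|t|}$ for all $t\ge t_0$, where $|t|=t^1+\dots+t^m$.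
   Context: $\mathbb{N}=\{0,1,2,\dots\}$; $1_\alpha\in\mathbb{Z}^m$ has $1$ in position $\alpha$ and $0$ elsewhere; $s\le t$ in $\mathbb{Z}^m$ means $s^\alpha\le t^\alpha$ for all $\alpha$. Under the compatibility relations, for each $s\in\mathcal{Z}$ there is a unique $\chi(\cdot,s)\colon\{t\in\mathcal{Z}\mid t\ge s\}\to\mathcal{M}_n(\mathbb{C})$ with $\chi(s,s)=I_n$ and $\chi(t+1_\alpha,s)=A_\alpha(t)\chi(t,s)$ for all $t\ge s$ and all $\alpha$ (the transition matrix). Negative integer powers of $B$ are powers of $B^{-1}$. *)

theory Defs
  imports "HOL-Analysis.Analysis" "HOL-Library.Function_Algebras"
begin

primrec mat_pow :: "'a::comm_ring_1 ^'n^'n \<Rightarrow> nat \<Rightarrow> 'a ^'n^'n" where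
  "mat_pow B 0 = mat 1"
| "mat_pow B (Suc k) = B ** mat_pow B k"

definition mat_ipow :: "'a::field ^'n^'n \<Rightarrow> int \<Rightarrow> 'a ^'n^'n" where
  "mat_ipow B k = (if 0 \<le> k then mat_pow B (nat k) else mat_pow (matrix_inv B) (nat (- k)))"

definition unit_pt :: "'m \<Rightarrow> ('m \<Rightarrow> int)" where
  "unit_pt \<alpha> = (\<lambda>\<beta>. if \<beta> = \<alpha> then 1 else 0)"

definition abs_pt :: "('m::finite \<Rightarrow> int) \<Rightarrow> int" where
  "abs_pt t = (\<Sum>\<beta>\<in>UNIV. t \<beta>)"

(* Phi is the transition matrix chi(., s) from s: Phi s = I and Phi(t+1_alpha) = A_alpha(t) Phi(t) *)
definition is_transition_from ::
  "('m \<Rightarrow> ('m \<Rightarrow> int) \<Rightarrow> 'a::comm_ring_1^'n^'n) \<Rightarrow> ('m \<Rightarrow> int) \<Rightarrow> (('m \<Rightarrow> int) \<Rightarrow> 'a^'n^'n) \<Rightarrow> bool" where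
  "is_transition_from A s Phi \<longleftrightarrow> Phi s = mat 1 \<and>
     (\<forall>t \<ge> s. \<forall>\<alpha>. Phi (t + unit_pt \<alpha>) = A \<alpha> t ** Phi t)"

end

theory Submission
  imports
    Defs
    "HOL-Computational_Algebra.Fundamental_Theorem_Algebra"
    "HOL-Computational_Algebra.Field_as_Ring"
    "HOL-Computational_Algebra.Polynomial_Factorial"
begin

text \<open>
  Periodicity of the coefficients gives \<open>\<Phi>(t + T) = \<Phi>(t) C\<close> with the invertible monodromy
  matrix \<open>C = \<Phi>(t\<^sub>0 + T)\<close>. With \<open>k = |T| > 0\<close>, it suffices to find an invertible \<open>B\<close>
  with \<open>B\<^sup>k = C\<close>: then \<open>P(t) = \<Phi>(t) B^(-|t|)\<close> is \<open>T\<close>-periodic because \<open>|t + T| = |t| + k\<close>.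
  The root is a polynomial in \<open>C\<close>: if \<open>s\<close> annihilates \<open>C\<close> and \<open>s(0) \<noteq> 0\<close>, a polynomial \<open>q\<close>
  with \<open>q\<^sup>k \<equiv> X\<close> modulo \<open>s\<close> exists by Hensel lifting at each root of \<open>s\<close> and the Chinese
  remainder theorem, and \<open>B = q(C)\<close>.
\<close>

section \<open>\<open>k\<close>-th roots modulo a polynomial\<close>

lemma square_dvd_power_sub_linear_term:
  fixes x y :: "'a::comm_ring_1"
  shows "y\<^sup>2 dvd (x + y) ^ n - x ^ n - of_nat n * x ^ (n - 1) * y"
proof (induction n)
  case 0
  show ?case by simp
next
  case (Suc n)
  then obtain m where m: "(x + y) ^ n = x ^ n + of_nat n * x ^ (n - 1) * y + y\<^sup>2 * m"
    by (auto elim!: dvdE simp: algebra_simps)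
  have "of_nat n * x ^ (n - 1) * x = of_nat n * x ^ n"
    by (cases n) (simp_all add: algebra_simps)
  then have "(x + y) ^ Suc n - x ^ Suc n - of_nat (Suc n) * x ^ n * y
      = y\<^sup>2 * (of_nat n * x ^ (n - 1) + (x + y) * m)"
    by (simp add: m algebra_simps power2_eq_square)
  then show ?case by simp
qed

lemma root_mod_linear_power_lift:
  fixes c :: "'a::field_char_0"
  assumes dvd: "[:-c, 1:] ^ e dvd q ^ k - f" and "e > 0" "k > 0" and "poly q c \<noteq> 0"
  shows "\<exists>h. [:-c, 1:] ^ Suc e dvd (q + [:h:] * [:-c, 1:] ^ e) ^ k - f"
proof -
  define X where "X = [:-c, 1:]"
  from dvd obtain g where g: "q ^ k - f = X ^ e * g"
    unfolding X_def by (rule dvdE)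
  \<comment> \<open>Newton step: the linear term \<open>k q^(k-1) h X^e\<close> cancels the error \<open>X^e g\<close> at \<open>c\<close>.\<close>
  define h where "h = - poly g c / (of_nat k * poly q c ^ (k - 1))"
  define y where "y = [:h:] * X ^ e"
  obtain m where m: "(q + y) ^ k - q ^ k - of_nat k * q ^ (k - 1) * y = y\<^sup>2 * m"
    using square_dvd_power_sub_linear_term by (rule dvdE)
  have "poly (g + of_nat k * q ^ (k - 1) * [:h:]) c = 0"
    using assms by (simp add: h_def)
  then obtain g' where g': "g + of_nat k * q ^ (k - 1) * [:h:] = X * g'"
    unfolding X_def poly_eq_0_iff_dvd by (rule dvdE)
  have "y\<^sup>2 = (X ^ e * X ^ e) * [:h:]\<^sup>2"
    by (simp only: y_def power2_eq_square mult_ac)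
  also have "X ^ e * X ^ e = X ^ Suc e * X ^ (e - 1)"
    using \<open>e > 0\<close> power_add[of X e e] power_add[of X "Suc e" "e - 1"] by simp
  finally have y2: "y\<^sup>2 = X ^ Suc e * (X ^ (e - 1) * [:h:]\<^sup>2)"
    by (simp only: mult.assoc)
  have "(q + y) ^ k - f = (q ^ k - f) + of_nat k * q ^ (k - 1) * y + y\<^sup>2 * m"
    using m by (simp add: algebra_simps)
  also have "\<dots> = X ^ e * (g + of_nat k * q ^ (k - 1) * [:h:]) + y\<^sup>2 * m"
    by (simp add: g y_def algebra_simps)
  also have "\<dots> = X ^ Suc e * (g' + X ^ (e - 1) * [:h:]\<^sup>2 * m)"
    unfolding g' y2 by (simp add: algebra_simps)
  finally show ?thesis
    unfolding X_def y_def by (intro exI[of _ h]) simp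
qed

lemma root_mod_linear_power:
  fixes f :: "'a::{alg_closed_field, field_char_0} poly"
  assumes "poly f c \<noteq> 0" "k > 0"
  shows "\<exists>q. [:-c, 1:] ^ e dvd q ^ k - f"
proof -
  have "\<exists>q. [:-c, 1:] ^ Suc e dvd q ^ k - f \<and> poly q c \<noteq> 0"
  proof (induction e)
    case 0
    obtain \<mu> where \<mu>: "\<mu> ^ k = poly f c"
      using nth_root_exists \<open>k > 0\<close> by blast
    then have "\<mu> \<noteq> 0"
      using assms by (auto simp: zero_power)
    moreover have "[:-c, 1:] dvd [:\<mu>:] ^ k - f"
      using \<mu> by (simp flip: poly_eq_0_iff_dvd)
    ultimately show ?case
      by (intro exI[of _ "[:\<mu>:]"]) simp
  next
    case (Suc e)
    then obtain q where q: "[:-c, 1:] ^ Suc e dvd q ^ k - f" "poly q c \<noteq> 0"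
      by blast
    then obtain h where "[:-c, 1:] ^ Suc (Suc e) dvd (q + [:h:] * [:-c, 1:] ^ Suc e) ^ k - f"
      using root_mod_linear_power_lift \<open>k > 0\<close> by blast
    moreover have "poly (q + [:h:] * [:-c, 1:] ^ Suc e) c = poly q c"
      by simp
    ultimately show ?case
      using q(2) by metis
  qed
  then show ?thesis
    using power_le_dvd le_SucI by blast
qed

lemma dvd_power_sub_cong:
  fixes a :: "'a::comm_ring_1"
  assumes "a dvd q - q'" "a dvd q' ^ k - f"
  shows "a dvd q ^ k - f"
proof -
  have "q - q' dvd q ^ k - q' ^ k"
    by (simp add: power_diff_sumr2)
  then have "a dvd (q ^ k - q' ^ k) + (q' ^ k - f)"
    using assms dvd_trans dvd_add by blast
  then show ?thesis
    by simp
qed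

lemma root_mod_coprime_mult:
  fixes a b :: "'a::euclidean_ring_gcd"
  assumes "coprime a b" "a dvd q\<^sub>1 ^ k - f" "b dvd q\<^sub>2 ^ k - f"
  shows "\<exists>q. a * b dvd q ^ k - f"
proof -
  obtain u v where uv: "u * a + v * b = 1"
    using bezout_coefficients_fst_snd[of a b] \<open>coprime a b\<close> by (auto simp: coprime_iff_gcd_eq_1)
  define q where "q = q\<^sub>1 * v * b + q\<^sub>2 * u * a"
  have "q - q\<^sub>1 = q - q\<^sub>1 * (u * a + v * b)" "q - q\<^sub>2 = q - q\<^sub>2 * (u * a + v * b)"
    using uv by simp_all
  then have "q - q\<^sub>1 = a * ((q\<^sub>2 - q\<^sub>1) * u)" "q - q\<^sub>2 = b * ((q\<^sub>1 - q\<^sub>2) * v)"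
    by (simp_all add: q_def algebra_simps)
  then have "a dvd q - q\<^sub>1" "b dvd q - q\<^sub>2"
    by simp_all
  then have "a dvd q ^ k - f" "b dvd q ^ k - f"
    using assms(2,3) by (blast intro: dvd_power_sub_cong)+
  then show ?thesis
    using divides_mult \<open>coprime a b\<close> by blast
qed

lemma root_mod:
  fixes r f :: "complex poly"
  assumes "r \<noteq> 0" "\<And>c. poly r c = 0 \<Longrightarrow> poly f c \<noteq> 0" "k > 0"
  shows "\<exists>q. r dvd q ^ k - f"
  using assms(1,2)
proof (induction "degree r" arbitrary: r rule: less_induct)
  case less
  show ?case
  proof (cases "degree r = 0")
    case True
    then have "is_unit r"
      using less.prems(1) is_unit_iff_degree by blast
    then show ?thesis
      by blast
  next
    case False
    then obtain c where c: "poly r c = 0"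
      using alg_closed_imp_poly_has_root by blast
    define e where "e = order c r"
    obtain s where r: "r = [:-c, 1:] ^ e * s" and "\<not> [:-c, 1:] dvd s"
      using order_decomp[OF less.prems(1)] unfolding e_def by blast
    have "s \<noteq> 0" "e > 0"
      using r c less.prems(1) order_root unfolding e_def by auto
    then have "degree s < degree r"
      by (simp add: r degree_mult_eq degree_linear_power)
    moreover have "poly f c' \<noteq> 0" if "poly s c' = 0" for c'
      using that less.prems(2) by (simp add: r)
    ultimately obtain q\<^sub>2 where "s dvd q\<^sub>2 ^ k - f"
      using less.hyps \<open>s \<noteq> 0\<close> by blast
    moreover obtain q\<^sub>1 where "[:-c, 1:] ^ e dvd q\<^sub>1 ^ k - f"
      using root_mod_linear_power less.prems(2) c \<open>k > 0\<close> by blast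
    moreover have "coprime [:-c, 1:] s"
      using prime_elem_linear_field_poly[of 1 "-c"] \<open>\<not> [:-c, 1:] dvd s\<close>
      by (simp add: prime_elem_imp_coprime)
    then have "coprime ([:-c, 1:] ^ e) s"
      by simp
    ultimately show ?thesis
      using root_mod_coprime_mult r by metis
  qed
qed

section \<open>Polynomials evaluated at a matrix\<close>

lemma matrix_add_rdistrib: "(A + B) ** C = A ** C + B ** C"
  by (vector matrix_matrix_mult_def sum.distrib[symmetric] field_simps)

lemma mat_mult_left: "mat a ** (A::'a::comm_semiring_1^'n^'m) = (\<chi> i j. a * A$i$j)"
  unfolding matrix_matrix_mult_def mat_def
  by (auto simp: vec_eq_iff if_distrib if_distribR sum.delta'[OF finite] cong: if_cong)

lemma mat_mult_right: "(A::'a::comm_semiring_1^'n^'m) ** mat a = (\<chi> i j. a * A$i$j)"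
  unfolding matrix_matrix_mult_def mat_def
  by (auto simp: vec_eq_iff if_distrib if_distribR sum.delta'[OF finite] mult.commute cong: if_cong)

lemma mat_mult_commute: "mat a ** (A::'a::comm_semiring_1^'n^'n) = A ** mat a"
  by (simp add: mat_mult_left mat_mult_right)

lemma mat_mult_left_commute: "mat a ** ((A::'a::comm_semiring_1^'n^'n) ** X) = A ** (mat a ** X)"
  by (metis mat_mult_commute matrix_mul_assoc)

lemma mat_add_mat: "mat a + mat b = (mat (a + b) :: 'a::semiring_1^'n^'n)"
  by (simp add: vec_eq_iff mat_def)

lemma mat_mult_mat: "mat a ** mat b = (mat (a * b) :: 'a::comm_semiring_1^'n^'n)"
  unfolding mat_mult_left by (simp add: vec_eq_iff mat_def)

lemma mat_of_real_mult:
  "mat (of_real r) ** (M::'a::{real_algebra_1, comm_semiring_1}^'n^'m) = r *\<^sub>R M"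
  unfolding mat_mult_left by (simp add: vec_eq_iff) (simp add: scaleR_conv_of_real)

lemma invertible_mat_1: "invertible (mat 1 :: 'a::semiring_1^'n^'n)"
  unfolding invertible_def by (intro exI[of _ "mat 1"]) simp

lemma invertible_mat_pow: "invertible B \<Longrightarrow> invertible (mat_pow B k)"
  by (induction k) (simp_all add: invertible_mat_1 invertible_mult)

definition matrix_poly :: "'a::comm_ring_1 poly \<Rightarrow> 'a^'n^'n \<Rightarrow> 'a^'n^'n" where
  "matrix_poly p C = fold_coeffs (\<lambda>a M. mat a + C ** M) p 0"

lemma matrix_poly_0 [simp]: "matrix_poly 0 C = 0"
  by (simp add: matrix_poly_def)

lemma matrix_poly_pCons [simp]: "matrix_poly (pCons a p) C = mat a + C ** matrix_poly p C"
  by (cases "p = 0 \<and> a = 0") (auto simp: matrix_poly_def)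

lemma matrix_poly_add: "matrix_poly (p + q) C = matrix_poly p C + matrix_poly q C"
proof (induction p arbitrary: q rule: pCons_induct)
  case 0
  show ?case by simp
next
  case (pCons a p)
  obtain b q' where q: "q = pCons b q'"
    by (cases q rule: pCons_cases)
  show ?case
    by (simp add: q pCons.IH matrix_add_ldistrib mat_add_mat[symmetric] add_ac)
qed

lemma matrix_poly_diff: "matrix_poly (p - q) C = matrix_poly p C - matrix_poly q C"
  by (metis add_diff_cancel matrix_poly_add diff_add_cancel)

lemma matrix_poly_smult: "matrix_poly (smult a p) C = mat a ** matrix_poly p C"
  by (induction p rule: pCons_induct)
    (simp_all add: matrix_add_ldistrib mat_mult_mat mat_mult_left_commute)

lemma matrix_poly_mult: "matrix_poly (p * q) C = matrix_poly p C ** matrix_poly q C"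
  by (induction p rule: pCons_induct)
    (simp_all add: matrix_poly_add matrix_poly_smult matrix_add_rdistrib matrix_mul_assoc)

lemma matrix_poly_power: "matrix_poly (p ^ k) C = mat_pow (matrix_poly p C) k"
  by (induction k) (simp_all add: matrix_poly_mult one_pCons)

lemma matrix_poly_monom: "matrix_poly (monom a j) C = mat a ** mat_pow C j"
  by (induction j) (simp_all add: monom_0 monom_Suc mat_mult_left_commute)

lemma matrix_poly_sum:
  "finite S \<Longrightarrow> matrix_poly (\<Sum>i\<in>S. f i) C = (\<Sum>i\<in>S. matrix_poly (f i) C)"
  by (induction S rule: finite_induct) (simp_all add: matrix_poly_add)

lemma matrix_poly_annihilator:
  fixes C :: "'a::{real_algebra_1, comm_ring_1, euclidean_space}^'n^'n"
  shows "\<exists>p. p \<noteq> 0 \<and> matrix_poly p C = 0"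
proof (cases "inj_on (mat_pow C) {..DIM('a^'n^'n)}")
  case False
  then obtain i j where ij: "i \<noteq> j" "mat_pow C i = mat_pow C j"
    by (auto simp: inj_on_def)
  define p :: "'a poly" where "p = monom 1 i - monom 1 j"
  have "coeff p i = 1"
    using ij by (simp add: p_def coeff_monom)
  then have "p \<noteq> 0"
    by auto
  moreover have "matrix_poly p C = 0"
    using ij by (simp add: p_def matrix_poly_diff matrix_poly_monom)
  ultimately show ?thesis
    by blast
next
  case True
  let ?S = "mat_pow C ` {..DIM('a^'n^'n)}"
  have "dependent ?S"
    using card_image[OF True] by (intro dependent_biggerset) simp
  then obtain u where u: "\<exists>v\<in>?S. u v \<noteq> 0" "(\<Sum>v\<in>?S. u v *\<^sub>R v) = 0"
    using real_vector.dependent_finite[of ?S] by auto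
  define p :: "'a poly" where "p = (\<Sum>j\<le>DIM('a^'n^'n). monom (of_real (u (mat_pow C j))) j)"
  obtain j where j: "j \<le> DIM('a^'n^'n)" "u (mat_pow C j) \<noteq> 0"
    using u(1) by auto
  then have "coeff p j \<noteq> 0"
    by (simp add: p_def coeff_sum coeff_monom)
  then have "p \<noteq> 0"
    by auto
  moreover have "matrix_poly p C = (\<Sum>j\<le>DIM('a^'n^'n). u (mat_pow C j) *\<^sub>R mat_pow C j)"
    by (simp add: p_def matrix_poly_sum matrix_poly_monom mat_of_real_mult)
  moreover have "\<dots> = (\<Sum>v\<in>?S. u v *\<^sub>R v)"
    using sum.reindex[OF True, of "\<lambda>v. u v *\<^sub>R v"] by simp
  ultimately show ?thesis
    using u(2) by auto
qed

lemma invertible_matrix_nth_root: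
  fixes C :: "complex^'n^'n"
  assumes "invertible C" "k > 0"
  shows "\<exists>B. invertible B \<and> mat_pow B k = C"
proof -
  obtain p where "p \<noteq> 0" and p: "matrix_poly p C = 0"
    using matrix_poly_annihilator by blast
  then obtain s where ps: "p = [:0, 1:] ^ order 0 p * s" and "\<not> [:0, 1:] dvd s"
    using order_decomp[of p 0] by auto
  then have "s \<noteq> 0" "poly s 0 \<noteq> 0"
    using \<open>p \<noteq> 0\<close> by (auto simp: poly_eq_0_iff_dvd)
  have "mat_pow C (order 0 p) ** matrix_poly s C = 0"
    using p by (subst (asm) ps) (simp add: matrix_poly_mult matrix_poly_power)
  with invertible_mat_pow[OF \<open>invertible C\<close>] have s: "matrix_poly s C = 0"
    by (metis invertible_def matrix_mul_assoc matrix_mul_lid times0_right)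
  have "poly [:0, 1:] c \<noteq> 0" if "poly s c = 0" for c
    using that \<open>poly s 0 \<noteq> 0\<close> by auto
  then obtain q where "s dvd q ^ k - [:0, 1:]"
    using root_mod \<open>s \<noteq> 0\<close> \<open>k > 0\<close> by blast
  then obtain w where "q ^ k - [:0, 1:] = s * w"
    by (rule dvdE)
  then have "matrix_poly (q ^ k - [:0, 1:]) C = 0"
    by (simp add: matrix_poly_mult s)
  then have root: "mat_pow (matrix_poly q C) k = C"
    by (simp add: matrix_poly_diff matrix_poly_power)
  obtain C' where "C ** C' = mat 1"
    using \<open>invertible C\<close> invertible_def by blast
  moreover obtain j where "k = Suc j"
    using \<open>k > 0\<close> not0_implies_Suc by blast
  ultimately have "matrix_poly q C ** (mat_pow (matrix_poly q C) j ** C') = mat 1"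
    using root by (simp add: matrix_mul_assoc)
  then show ?thesis
    using root invertible_right_inverse by blast
qed

section \<open>Integer powers of a matrix\<close>

lemma matrix_inv_right:
  "invertible (B :: 'a::semiring_1^'n^'n) \<Longrightarrow> B ** matrix_inv B = mat 1"
  and matrix_inv_left:
  "invertible (B :: 'a::semiring_1^'n^'n) \<Longrightarrow> matrix_inv B ** B = mat 1"
  unfolding invertible_def matrix_inv_def by (metis (mono_tags, lifting) someI_ex)+

lemma mat_ipow_of_nat [simp]: "mat_ipow B (int k) = mat_pow B k"
  by (simp add: mat_ipow_def)

lemma mat_ipow_uminus_of_nat: "mat_ipow B (- int k) = mat_pow (matrix_inv B) k"
  by (cases "k = 0") (auto simp: mat_ipow_def)

lemma mat_ipow_add_1:
  assumes "invertible B"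
  shows "mat_ipow B (a + 1) = B ** mat_ipow B a"
proof (cases "0 \<le> a")
  case True
  then have "nat (a + 1) = Suc (nat a)"
    by simp
  with True show ?thesis
    by (simp add: mat_ipow_def)
next
  case False
  define k where "k = nat (- a - 1)"
  have "a = - int (Suc k)" "a + 1 = - int k"
    using False by (simp_all add: k_def)
  then have "B ** mat_ipow B a = B ** (matrix_inv B ** mat_pow (matrix_inv B) k)"
    by (simp only: mat_ipow_uminus_of_nat mat_pow.simps)
  also have "\<dots> = mat_ipow B (a + 1)"
    by (simp add: \<open>a + 1 = - int k\<close> mat_ipow_uminus_of_nat matrix_mul_assoc
        matrix_inv_right[OF assms])
  finally show ?thesis ..
qed

lemma mat_ipow_diff_1:
  assumes "invertible B"
  shows "mat_ipow B (a - 1) = matrix_inv B ** mat_ipow B a"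
  using mat_ipow_add_1[OF assms, of "a - 1"]
  by (simp add: matrix_mul_assoc matrix_inv_left[OF assms])

lemma mat_ipow_add:
  assumes "invertible B"
  shows "mat_ipow B (a + b) = mat_ipow B b ** mat_ipow B a"
proof (induction b rule: int_induct[where k = 0])
  case base
  show ?case by (simp add: mat_ipow_def)
next
  case (step1 b)
  then show ?case
    using mat_ipow_add_1[OF assms, of "a + b"] mat_ipow_add_1[OF assms, of b]
    by (simp add: add.assoc matrix_mul_assoc)
next
  case (step2 b)
  then show ?case
    using mat_ipow_diff_1[OF assms, of "a + b"] mat_ipow_diff_1[OF assms, of b]
    by (simp add: algebra_simps matrix_mul_assoc)
qed

section \<open>Transition matrices of periodic systems\<close>

lemma grid_induct [consumes 1, case_names base step]:
  fixes t0 t :: "'m::finite \<Rightarrow> int"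
  assumes "t0 \<le> t" and "Q t0"
    and step: "\<And>t \<alpha>. t0 \<le> t \<Longrightarrow> Q t \<Longrightarrow> Q (t + unit_pt \<alpha>)"
  shows "Q t"
  using assms(1)
proof (induction "\<Sum>\<beta>\<in>UNIV. nat (t \<beta> - t0 \<beta>)" arbitrary: t rule: less_induct)
  case less
  show ?case
  proof (cases "t = t0")
    case True
    then show ?thesis using \<open>Q t0\<close> by simp
  next
    case False
    then obtain \<alpha> where \<alpha>: "t0 \<alpha> < t \<alpha>"
      using less.prems by (metis antisym le_fun_def not_le)
    define t' where "t' = t - unit_pt \<alpha>"
    have "t0 \<le> t'"
      using less.prems \<alpha> by (auto simp: le_fun_def t'_def unit_pt_def)
    moreover have "(\<Sum>\<beta>\<in>UNIV. nat (t' \<beta> - t0 \<beta>)) < (\<Sum>\<beta>\<in>UNIV. nat (t \<beta> - t0 \<beta>))"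
      using \<alpha> less.prems
      by (intro sum_strict_mono_ex1) (auto simp: t'_def unit_pt_def le_fun_def)
    ultimately have "Q t'"
      using less.hyps by blast
    moreover have "t = t' + unit_pt \<alpha>"
      by (simp add: t'_def)
    ultimately show ?thesis
      using step[OF \<open>t0 \<le> t'\<close>] by simp
  qed
qed

lemma abs_pt_add: "abs_pt (s + t) = abs_pt s + abs_pt t"
  by (simp add: abs_pt_def sum.distrib)

lemma transition_invertible:
  fixes t0 t :: "'m::finite \<Rightarrow> int"
  assumes "is_transition_from A t0 \<Phi>" "\<forall>t \<ge> t0. \<forall>\<alpha>. invertible (A \<alpha> t)" "t0 \<le> t"
  shows "invertible (\<Phi> t)"
  using assms(3)
proof (induction t rule: grid_induct)
  case base
  then show ?case
    using assms(1) by (simp add: is_transition_from_def invertible_mat_1)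
next
  case (step t \<alpha>)
  have "\<Phi> (t + unit_pt \<alpha>) = A \<alpha> t ** \<Phi> t"
    using assms(1) step(1) unfolding is_transition_from_def by blast
  moreover have "invertible (A \<alpha> t)"
    using assms(2) step(1) by blast
  ultimately show ?case
    using step(2) invertible_mult by metis
qed

lemma transition_shift:
  fixes S :: "'m::finite \<Rightarrow> int"
  assumes \<Phi>: "is_transition_from A t0 \<Phi>" and "0 \<le> S"
    and periodic: "\<forall>t \<ge> t0. \<forall>\<alpha>. A \<alpha> (t + S) = A \<alpha> t" and "t0 \<le> t"
  shows "\<Phi> (t + S) = \<Phi> t ** \<Phi> (t0 + S)"
  using \<open>t0 \<le> t\<close>
proof (induction t rule: grid_induct)
  case base
  then show ?case
    using \<Phi> by (simp add: is_transition_from_def)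
next
  case (step t \<alpha>)
  have "t0 \<le> t + S"
    using step(1) \<open>0 \<le> S\<close> by (simp add: add_increasing2)
  have "\<Phi> (t + unit_pt \<alpha> + S) = \<Phi> ((t + S) + unit_pt \<alpha>)"
    by (simp add: add_ac)
  also have "\<dots> = A \<alpha> (t + S) ** \<Phi> (t + S)"
    using \<Phi> \<open>t0 \<le> t + S\<close> unfolding is_transition_from_def by blast
  also have "A \<alpha> (t + S) = A \<alpha> t"
    using periodic step(1) by blast
  also have "\<Phi> (t + S) = \<Phi> t ** \<Phi> (t0 + S)"
    by (rule step(2))
  also have "A \<alpha> t ** (\<Phi> t ** \<Phi> (t0 + S)) = (A \<alpha> t ** \<Phi> t) ** \<Phi> (t0 + S)"
    by (rule matrix_mul_assoc)
  also have "A \<alpha> t ** \<Phi> t = \<Phi> (t + unit_pt \<alpha>)"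
    using \<Phi> step(1) by (simp add: is_transition_from_def)
  finally show ?case .
qed

lemma floquet_factorization:
  fixes B :: "'a::field^'n^'n" and S :: "'m::finite \<Rightarrow> int"
  assumes B: "invertible B" and shift: "\<forall>t \<ge> t0. \<Phi> (t + S) = \<Phi> t ** mat_ipow B (abs_pt S)"
  shows "\<exists>P. (\<forall>t \<ge> t0. P (t + S) = P t) \<and> (\<forall>t. \<Phi> t = P t ** mat_ipow B (abs_pt t))"
proof -
  define P where "P t = \<Phi> t ** mat_ipow B (- abs_pt t)" for t
  have "P (t + S) = P t" if "t0 \<le> t" for t
  proof -
    have "P (t + S) = \<Phi> t ** (mat_ipow B (abs_pt S) ** mat_ipow B (- abs_pt t - abs_pt S))"
      unfolding P_def abs_pt_add using shift that by (simp add: matrix_mul_assoc)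
    also have "\<dots> = P t"
      unfolding P_def mat_ipow_add[OF B, symmetric] by simp
    finally show ?thesis .
  qed
  moreover have "\<Phi> t = P t ** mat_ipow B (abs_pt t)" for t
    unfolding P_def matrix_mul_assoc[symmetric] mat_ipow_add[OF B, symmetric]
    by (simp add: mat_ipow_def)
  ultimately show ?thesis
    by blast
qed

theorem theorem2p17:
  fixes t0 :: "'m::finite \<Rightarrow> int"
    and T :: "'m \<Rightarrow> nat"
    and A :: "'m \<Rightarrow> ('m \<Rightarrow> int) \<Rightarrow> complex^'n::finite^'n"
    and \<Phi> :: "('m \<Rightarrow> int) \<Rightarrow> complex^'n^'n"
  assumes "T \<noteq> 0"
    and compat: "\<forall>t \<ge> t0. \<forall>\<alpha> \<beta>.
        A \<alpha> (t + unit_pt \<beta>) ** A \<beta> t = A \<beta> (t + unit_pt \<alpha>) ** A \<alpha> t"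
    and periodic: "\<forall>t \<ge> t0. \<forall>\<alpha>. A \<alpha> (\<lambda>\<beta>. t \<beta> + int (T \<beta>)) = A \<alpha> t"
    and inv: "\<forall>t \<ge> t0. \<forall>\<alpha>. invertible (A \<alpha> t)"
    and Phi: "is_transition_from A t0 \<Phi>"
  shows "\<exists>(P :: ('m \<Rightarrow> int) \<Rightarrow> complex^'n^'n) (B :: complex^'n^'n).
           (\<forall>t \<ge> t0. P (\<lambda>\<beta>. t \<beta> + int (T \<beta>)) = P t) \<and> invertible B \<and>
           (\<forall>t \<ge> t0. \<Phi> t = P t ** mat_ipow B (abs_pt t))"
  \<comment> \<open>\<open>compat\<close> is what makes a transition matrix exist; here \<open>\<Phi>\<close> is given.\<close>
proof -
  define S where "S = (\<lambda>\<beta>. int (T \<beta>))"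
  have plus_S: "(\<lambda>\<beta>. t \<beta> + int (T \<beta>)) = t + S" for t :: "'m \<Rightarrow> int"
    by (simp add: S_def plus_fun_def)
  define k where "k = (\<Sum>\<beta>\<in>UNIV. T \<beta>)"
  obtain \<beta> where "T \<beta> \<noteq> 0"
    using \<open>T \<noteq> 0\<close> by (auto simp: fun_eq_iff)
  moreover have "T \<beta> \<le> k"
    unfolding k_def by (rule member_le_sum) simp_all
  ultimately have "k > 0"
    by simp
  have abs_S: "abs_pt S = int k"
    by (simp add: k_def S_def abs_pt_def)
  have "0 \<le> S"
    unfolding S_def le_fun_def by simp
  then have "t0 \<le> t0 + S"
    by simp
  then have "invertible (\<Phi> (t0 + S))"
    using transition_invertible[OF Phi inv] by blast
  then obtain B where B: "invertible B" "mat_pow B k = \<Phi> (t0 + S)"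
    using invertible_matrix_nth_root \<open>k > 0\<close> by blast
  have "\<forall>t \<ge> t0. \<forall>\<alpha>. A \<alpha> (t + S) = A \<alpha> t"
    using periodic unfolding plus_S .
  then have "\<forall>t \<ge> t0. \<Phi> (t + S) = \<Phi> t ** mat_ipow B (abs_pt S)"
    using transition_shift[OF Phi \<open>0 \<le> S\<close>] unfolding abs_S mat_ipow_of_nat B(2) by blast
  then obtain P where "\<forall>t \<ge> t0. P (t + S) = P t" "\<forall>t. \<Phi> t = P t ** mat_ipow B (abs_pt t)"
    using floquet_factorization[OF B(1)] by blast
  then show ?thesis
    unfolding plus_S using B(1) by blast
qed

end
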